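(* Let $V^*=V\cup V^{\mathrm{abs}}$ be a finite set and $\{\eta(t),t\ge0\}$ a consistent configuration process on $V^*$ with generator $\mathcal L^{\mathrm{abs}}=\mathcal L+\mathcal H$. Let $\mathbf x=(x_1,\dots,x_n)\in(V^* )^n$. Then for all $m\in\{1,\dots,n-1\}$ and all $\zeta\in\Omega^{\mathrm{abs}}_m$, $$\mathbb E_{\phi(\mathbf x)}[F(\zeta,\eta(\infty))]=\sum_{1\le i_1<\dots<i_m\le n}\mathbb P_{\phi(x_{i_1},\dots,x_{i_m})}\big(\eta(\infty)=\zeta\big).$$
   Context: $V^{\mathrm{abs}}=V^*\setminus V$ is the set of absorbing sites, with rates $r(i,j)\ge0$ for $i\in V$, $j\in V^{\mathrm{abs}}$. $\mathcal L$ is the generator of a configuration process on $V$ (finite configurations with single-site space $\Lambda\subseteq\mathbb N_0$), acting only on $(\eta_i)_{i\in V}$, and $\mathcal Hf(\eta)=\sum_{i\in V,j\in V^{\mathrm{abs}}}r(i,j)\eta_i[f(\eta-\delta_i+\delta_j)-f(\eta)]$. Consistency means $[\mathcal L^{\mathrm{abs}},\mathcal A]=0$ with $\mathcal Af(\eta)=\sum_{x\in V^*}\eta_xf(\eta-\delta_x)$ (terms with $\eta_x=0$ vanish). $\phi(\mathbf y)=\sum_i\delta_{y_i}$. $\Omega^{\mathrm{abs}}_m$ is the set of configurations $\zeta\in\mathbb N_0^{V^{\mathrm{abs}}}$ with $\sum\zeta_j=m$, viewed as configurations on $V^*$ vanishing on $V$. $F(\zeta,\eta)=\prod_{j}\binom{\eta_j}{\zeta_j}$.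 $\mathbb P_\eta(\eta(\infty)=\zeta):=\lim_{t\to\infty}\mathbb P_\eta(\eta(t)=\zeta)$ and $\mathbb E_\eta[f(\eta(\infty))]:=\lim_{t\to\infty}\mathbb E_\eta[f(\eta(t))]$. *)

theory Defs
  imports Complex_Main
begin

text \<open>Sites have type 'v. The finite site set is Vs (= V^*), V \<subseteq> Vs,
  absorbing sites are Vs - V. Configurations are functions 'v \<Rightarrow> nat
  vanishing outside the relevant site set.\<close>

definition config_space :: "'v set \<Rightarrow> nat \<Rightarrow> ('v \<Rightarrow> nat) set" where
  "config_space S N = {\<eta>. (\<forall>x. x \<notin> S \<longrightarrow> \<eta> x = 0) \<and> sum \<eta> S = N}"

definition state_space :: "'v set \<Rightarrow> 'v set \<Rightarrow> nat set \<Rightarrow> ('v \<Rightarrow> nat) set" where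
  "state_space V Vs \<Lambda> = {\<eta>. (\<forall>x. x \<notin> Vs \<longrightarrow> \<eta> x = 0) \<and> (\<forall>i\<in>V. \<eta> i \<in> \<Lambda>)}"

definition restrV :: "'v set \<Rightarrow> ('v \<Rightarrow> nat) \<Rightarrow> ('v \<Rightarrow> nat)" where
  "restrV V \<eta> = (\<lambda>x. if x \<in> V then \<eta> x else 0)"

definition genL :: "'v set \<Rightarrow> (('v \<Rightarrow> nat) \<Rightarrow> ('v \<Rightarrow> nat) \<Rightarrow> real)
    \<Rightarrow> (('v \<Rightarrow> nat) \<Rightarrow> real) \<Rightarrow> ('v \<Rightarrow> nat) \<Rightarrow> real" where
  "genL V c f \<eta> = (\<Sum>\<xi>'\<in>config_space V (sum \<eta> V).
      c (restrV V \<eta>) \<xi>' * (f (\<lambda>x. if x \<in> V then \<xi>' x else \<eta> x) - f \<eta>))"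

definition genH :: "'v set \<Rightarrow> 'v set \<Rightarrow> ('v \<Rightarrow> 'v \<Rightarrow> real)
    \<Rightarrow> (('v \<Rightarrow> nat) \<Rightarrow> real) \<Rightarrow> ('v \<Rightarrow> nat) \<Rightarrow> real" where
  "genH V Vs r f \<eta> = (\<Sum>i\<in>V. \<Sum>j\<in>Vs - V.
      r i j * real (\<eta> i) * (f (\<eta>(i := \<eta> i - 1, j := \<eta> j + 1)) - f \<eta>))"

definition genAbs :: "'v set \<Rightarrow> 'v set \<Rightarrow> (('v \<Rightarrow> nat) \<Rightarrow> ('v \<Rightarrow> nat) \<Rightarrow> real)
    \<Rightarrow> ('v \<Rightarrow> 'v \<Rightarrow> real) \<Rightarrow> (('v \<Rightarrow> nat) \<Rightarrow> real) \<Rightarrow> ('v \<Rightarrow> nat) \<Rightarrow> real" where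
  "genAbs V Vs c r f \<eta> = genL V c f \<eta> + genH V Vs r f \<eta>"

definition annih :: "'v set \<Rightarrow> (('v \<Rightarrow> nat) \<Rightarrow> real) \<Rightarrow> ('v \<Rightarrow> nat) \<Rightarrow> real" where
  "annih Vs f \<eta> = (\<Sum>x\<in>Vs. real (\<eta> x) * f (\<eta>(x := \<eta> x - 1)))"

definition rate :: "'v set \<Rightarrow> 'v set \<Rightarrow> (('v \<Rightarrow> nat) \<Rightarrow> ('v \<Rightarrow> nat) \<Rightarrow> real)
    \<Rightarrow> ('v \<Rightarrow> 'v \<Rightarrow> real) \<Rightarrow> ('v \<Rightarrow> nat) \<Rightarrow> ('v \<Rightarrow> nat) \<Rightarrow> real" where
  "rate V Vs c r \<eta> \<eta>' = genAbs V Vs c r (\<lambda>\<zeta>. if \<zeta> = \<eta>' then 1 else 0) \<eta>"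

fun Qpow :: "'v set \<Rightarrow> 'v set \<Rightarrow> (('v \<Rightarrow> nat) \<Rightarrow> ('v \<Rightarrow> nat) \<Rightarrow> real)
    \<Rightarrow> ('v \<Rightarrow> 'v \<Rightarrow> real) \<Rightarrow> nat \<Rightarrow> ('v \<Rightarrow> nat) \<Rightarrow> ('v \<Rightarrow> nat) \<Rightarrow> real" where
  "Qpow V Vs c r 0 \<eta> \<xi> = (if \<eta> = \<xi> then 1 else 0)"
| "Qpow V Vs c r (Suc k) \<eta> \<xi> =
     (\<Sum>\<zeta>\<in>config_space Vs (sum \<eta> Vs). rate V Vs c r \<eta> \<zeta> * Qpow V Vs c r k \<zeta> \<xi>)"

text \<open>Transition probabilities P_\<eta>(\<eta>(t) = \<xi>) = exp(tQ)(\<eta>,\<xi>).\<close>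
definition trans_prob :: "'v set \<Rightarrow> 'v set \<Rightarrow> (('v \<Rightarrow> nat) \<Rightarrow> ('v \<Rightarrow> nat) \<Rightarrow> real)
    \<Rightarrow> ('v \<Rightarrow> 'v \<Rightarrow> real) \<Rightarrow> real \<Rightarrow> ('v \<Rightarrow> nat) \<Rightarrow> ('v \<Rightarrow> nat) \<Rightarrow> real" where
  "trans_prob V Vs c r t \<eta> \<xi> = (\<Sum>k. t ^ k / fact k * Qpow V Vs c r k \<eta> \<xi>)"

definition expect_t :: "'v set \<Rightarrow> 'v set \<Rightarrow> (('v \<Rightarrow> nat) \<Rightarrow> ('v \<Rightarrow> nat) \<Rightarrow> real)
    \<Rightarrow> ('v \<Rightarrow> 'v \<Rightarrow> real) \<Rightarrow> real \<Rightarrow> ('v \<Rightarrow> nat) \<Rightarrow> (('v \<Rightarrow> nat) \<Rightarrow> real) \<Rightarrow> real" where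
  "expect_t V Vs c r t \<eta> f =
     (\<Sum>\<xi>\<in>config_space Vs (sum \<eta> Vs). trans_prob V Vs c r t \<eta> \<xi> * f \<xi>)"

definition prob_inf :: "'v set \<Rightarrow> 'v set \<Rightarrow> (('v \<Rightarrow> nat) \<Rightarrow> ('v \<Rightarrow> nat) \<Rightarrow> real)
    \<Rightarrow> ('v \<Rightarrow> 'v \<Rightarrow> real) \<Rightarrow> ('v \<Rightarrow> nat) \<Rightarrow> ('v \<Rightarrow> nat) \<Rightarrow> real" where
  "prob_inf V Vs c r \<eta> \<zeta> = Lim at_top (\<lambda>t. trans_prob V Vs c r t \<eta> \<zeta>)"

definition expect_inf :: "'v set \<Rightarrow> 'v set \<Rightarrow> (('v \<Rightarrow> nat) \<Rightarrow> ('v \<Rightarrow> nat) \<Rightarrow> real)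
    \<Rightarrow> ('v \<Rightarrow> 'v \<Rightarrow> real) \<Rightarrow> ('v \<Rightarrow> nat) \<Rightarrow> (('v \<Rightarrow> nat) \<Rightarrow> real) \<Rightarrow> real" where
  "expect_inf V Vs c r \<eta> f = Lim at_top (\<lambda>t. expect_t V Vs c r t \<eta> f)"

definition phi :: "'v list \<Rightarrow> ('v \<Rightarrow> nat)" where
  "phi ys = (\<lambda>v. length (filter (\<lambda>y. y = v) ys))"

definition Fdual :: "'v set \<Rightarrow> ('v \<Rightarrow> nat) \<Rightarrow> ('v \<Rightarrow> nat) \<Rightarrow> real" where
  "Fdual Vabs \<zeta> \<eta> = (\<Prod>j\<in>Vabs. real (\<eta> j choose \<zeta> j))"

definition consistent :: "'v set \<Rightarrow> 'v set \<Rightarrow> nat set \<Rightarrow> (('v \<Rightarrow> nat) \<Rightarrow> ('v \<Rightarrow> nat) \<Rightarrow> real)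
    \<Rightarrow> ('v \<Rightarrow> 'v \<Rightarrow> real) \<Rightarrow> bool" where
  "consistent V Vs \<Lambda> c r \<longleftrightarrow>
     (\<forall>f \<eta>. \<eta> \<in> state_space V Vs \<Lambda> \<longrightarrow>
        genAbs V Vs c r (annih Vs f) \<eta> = annih Vs (genAbs V Vs c r f) \<eta>)"

end

theory Submission
  imports Defs
begin

text \<open>For \<open>|\<xi>| = n\<close> and \<open>\<zeta>\<close> of size m on the absorbing sites, the duality function is an
  iterated annihilation of an indicator, \<open>F(\<zeta>, \<xi>) = A^(n-m) 1_\<zeta> (\<xi>) / (n-m)!\<close>, because
  A multiplies \<open>\<Prod>_x C(\<xi>_x, \<zeta>_x)\<close> by \<open>|\<xi>| - |\<zeta>|\<close>. Consistency lets A commute with the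
  semigroup of \<open>L^abs\<close>, and \<open>A^(n-m)\<close> evaluated at \<open>\<phi>(x)\<close> deletes n - m particles in all
  possible orders, i.e. runs over the m-element sublists of x, each (n - m)! times. This gives
  the identity at every finite time. As \<open>t \<rightarrow> \<infinity>\<close> each summand converges, since
  \<open>P_\<eta>(\<eta>(t) = \<zeta>)\<close> is nondecreasing in t when \<zeta> has no particles on V.\<close>

section \<open>Exponentials of finite rate matrices\<close>

fun mat_pow :: "('s \<Rightarrow> 's \<Rightarrow> real) \<Rightarrow> 's set \<Rightarrow> nat \<Rightarrow> 's \<Rightarrow> 's \<Rightarrow> real" where
  "mat_pow Q S 0 a b = (if a = b then 1 else 0)"
| "mat_pow Q S (Suc k) a b = (\<Sum>z\<in>S. Q a z * mat_pow Q S k z b)"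

definition mat_exp :: "('s \<Rightarrow> 's \<Rightarrow> real) \<Rightarrow> 's set \<Rightarrow> real \<Rightarrow> 's \<Rightarrow> 's \<Rightarrow> real" where
  "mat_exp Q S t a b = (\<Sum>k. t ^ k / fact k * mat_pow Q S k a b)"

definition abs_entry_sum :: "('s \<Rightarrow> 's \<Rightarrow> real) \<Rightarrow> 's set \<Rightarrow> real" where
  "abs_entry_sum Q S = (\<Sum>a\<in>S. \<Sum>b\<in>S. \<bar>Q a b\<bar>)"

lemma abs_entry_sum_nonneg: "0 \<le> abs_entry_sum Q S"
  unfolding abs_entry_sum_def by (intro sum_nonneg) auto

lemma row_abs_sum_le_abs_entry_sum:
  "finite S \<Longrightarrow> a \<in> S \<Longrightarrow> (\<Sum>b\<in>S. \<bar>Q a b\<bar>) \<le> abs_entry_sum Q S"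
  unfolding abs_entry_sum_def
  by (rule member_le_sum[where f="\<lambda>a. \<Sum>b\<in>S. \<bar>Q a b\<bar>"]) (auto intro: sum_nonneg)

lemma abs_mat_pow_le:
  assumes "finite S" "a \<in> S"
  shows "\<bar>mat_pow Q S k a b\<bar> \<le> abs_entry_sum Q S ^ k"
  using assms(2)
proof (induction k arbitrary: a)
  case (Suc k)
  have "\<bar>mat_pow Q S (Suc k) a b\<bar> \<le> (\<Sum>z\<in>S. \<bar>Q a z\<bar> * abs_entry_sum Q S ^ k)"
    unfolding mat_pow.simps
    by (rule order_trans[OF sum_abs]) (auto intro!: sum_mono mult_left_mono Suc.IH simp: abs_mult)
  also have "\<dots> \<le> abs_entry_sum Q S * abs_entry_sum Q S ^ k"
    unfolding sum_distrib_right[symmetric]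
    by (intro mult_right_mono row_abs_sum_le_abs_entry_sum assms(1) Suc.prems) (simp add: abs_entry_sum_nonneg)
  finally show ?case by simp
qed simp

lemma summable_abs_mat_exp_series:
  assumes "finite S" "a \<in> S"
  shows "summable (\<lambda>k. \<bar>t ^ k / fact k * mat_pow Q S k a b\<bar>)"
proof (rule summable_comparison_test[OF _ summable_exp[of "\<bar>t\<bar> * abs_entry_sum Q S"]], intro exI allI impI)
  fix k :: nat
  have "\<bar>t ^ k / fact k * mat_pow Q S k a b\<bar> = \<bar>t\<bar> ^ k / fact k * \<bar>mat_pow Q S k a b\<bar>"
    by (simp add: abs_mult power_abs)
  also have "\<dots> \<le> \<bar>t\<bar> ^ k / fact k * abs_entry_sum Q S ^ k"
    by (rule mult_left_mono[OF abs_mat_pow_le[OF assms]]) simp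
  finally show "norm \<bar>t ^ k / fact k * mat_pow Q S k a b\<bar> \<le> inverse (fact k) * (\<bar>t\<bar> * abs_entry_sum Q S) ^ k"
    by (simp add: power_mult_distrib field_simps)
qed

lemma summable_mat_exp_series:
  "finite S \<Longrightarrow> a \<in> S \<Longrightarrow> summable (\<lambda>k. t ^ k / fact k * mat_pow Q S k a b)"
  using summable_rabs_cancel[OF summable_abs_mat_exp_series] .

lemma mat_pow_Suc_right:
  assumes "finite S" "a \<in> S" "b \<in> S"
  shows "mat_pow Q S (Suc k) a b = (\<Sum>z\<in>S. mat_pow Q S k a z * Q z b)"
  using assms(2)
proof (induction k arbitrary: a)
  case 0
  then show ?case
    using assms by (simp add: if_distrib[of "\<lambda>x. Q _ _ * x"] if_distrib[of "\<lambda>x. x * Q _ _"] cong: if_cong)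
next
  case (Suc k)
  have "mat_pow Q S (Suc (Suc k)) a b = (\<Sum>y\<in>S. Q a y * mat_pow Q S (Suc k) y b)"
    by (rule mat_pow.simps(2))
  also have "\<dots> = (\<Sum>y\<in>S. Q a y * (\<Sum>z\<in>S. mat_pow Q S k y z * Q z b))"
    by (intro sum.cong refl) (simp only: Suc.IH)
  also have "\<dots> = (\<Sum>z\<in>S. (\<Sum>y\<in>S. Q a y * mat_pow Q S k y z) * Q z b)"
    by (simp only: sum_distrib_left sum_distrib_right mult.assoc) (rule sum.swap)
  finally show ?case by simp
qed

lemma sum_mat_pow_row:
  assumes "finite S" "a \<in> S" "\<And>x. x \<in> S \<Longrightarrow> (\<Sum>y\<in>S. Q x y) = 0"
  shows "(\<Sum>b\<in>S. mat_pow Q S k a b) = (if k = 0 then 1 else 0)"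
  using assms(2)
proof (induction k arbitrary: a)
  case (Suc k)
  have "(\<Sum>b\<in>S. mat_pow Q S (Suc k) a b) = (\<Sum>z\<in>S. Q a z * (\<Sum>b\<in>S. mat_pow Q S k z b))"
    by (simp only: mat_pow.simps(2) sum_distrib_left) (rule sum.swap)
  also have "\<dots> = (if k = 0 then (\<Sum>z\<in>S. Q a z) else 0)"
    by (simp add: Suc.IH)
  finally show ?case using assms(3)[OF Suc.prems] by simp
qed (use assms in simp)

lemma binomial_sum_Suc:
  fixes a :: "nat \<Rightarrow> real"
  shows "(\<Sum>i\<le>k. real (k choose i) * l ^ (k - i) * a (Suc i)) + l * (\<Sum>i\<le>k. real (k choose i) * l ^ (k - i) * a i)
       = (\<Sum>i\<le>Suc k. real (Suc k choose i) * l ^ (Suc k - i) * a i)"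
proof -
  have "l * (\<Sum>i\<le>k. real (k choose i) * l ^ (k - i) * a i) = (\<Sum>i\<le>Suc k. real (k choose i) * l ^ (Suc k - i) * a i)"
    by (simp add: sum_distrib_left Suc_diff_le mult_ac)
  also have "\<dots> = l ^ Suc k * a 0 + (\<Sum>j\<le>k. real (k choose Suc j) * l ^ (k - j) * a (Suc j))"
    by (subst sum.atMost_Suc_shift) simp
  finally show ?thesis
    by (subst sum.atMost_Suc_shift) (simp add: sum.distrib[symmetric] algebra_simps)
qed

lemma mat_pow_add_diag:
  assumes "finite S" "a \<in> S"
  shows "mat_pow (\<lambda>x y. Q x y + (if x = y then l else 0)) S k a b
       = (\<Sum>i\<le>k. real (k choose i) * l ^ (k - i) * mat_pow Q S i a b)"
  using assms(2)
proof (induction k arbitrary: a)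
  case (Suc k)
  let ?R = "\<lambda>x y. Q x y + (if x = y then l else 0)"
  let ?B = "\<lambda>z. \<Sum>i\<le>k. real (k choose i) * l ^ (k - i) * mat_pow Q S i z b"
  have "mat_pow ?R S (Suc k) a b = (\<Sum>z\<in>S. Q a z * ?B z) + (\<Sum>z\<in>S. (if a = z then l else 0) * ?B z)"
    by (simp add: Suc.IH distrib_right sum.distrib)
  also have "(\<Sum>z\<in>S. (if a = z then l else 0) * ?B z) = l * ?B a"
    using Suc.prems assms(1) by (simp add: if_distrib[of "\<lambda>x. x * _"] cong: if_cong)
  also have "(\<Sum>z\<in>S. Q a z * ?B z) = (\<Sum>i\<le>k. \<Sum>z\<in>S. real (k choose i) * l ^ (k - i) * (Q a z * mat_pow Q S i z b))"
    by (simp add: sum_distrib_left mult_ac) (rule sum.swap)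
  also have "\<dots> = (\<Sum>i\<le>k. real (k choose i) * l ^ (k - i) * mat_pow Q S (Suc i) a b)"
    by (simp only: mat_pow.simps(2) sum_distrib_left)
  finally show ?case using binomial_sum_Suc[where a="\<lambda>i. mat_pow Q S i a b"] by simp
qed simp

lemma mat_pow_nonneg:
  assumes "finite S" "a \<in> S" "\<And>x y. x \<in> S \<Longrightarrow> y \<in> S \<Longrightarrow> 0 \<le> Q x y"
  shows "0 \<le> mat_pow Q S k a b"
  using assms(2) by (induction k arbitrary: a) (auto intro!: sum_nonneg mult_nonneg_nonneg assms(3))

lemma exp_mult_mat_exp:
  assumes "finite S" "a \<in> S"
  shows "exp (l * t) * mat_exp Q S t a b = mat_exp (\<lambda>x y. Q x y + (if x = y then l else 0)) S t a b"
proof -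
  have "exp (l * t) * mat_exp Q S t a b = mat_exp Q S t a b * (\<Sum>k. (l * t) ^ k / fact k)"
    using exp_converges[of "l * t"] by (simp add: sums_iff divide_inverse mult.commute)
  also have "\<dots> = (\<Sum>k. \<Sum>i\<le>k. (t ^ i / fact i * mat_pow Q S i a b) * ((l * t) ^ (k - i) / fact (k - i)))"
    unfolding mat_exp_def
  proof (rule Cauchy_product)
    show "summable (\<lambda>k. norm (t ^ k / fact k * mat_pow Q S k a b))"
      using summable_abs_mat_exp_series[OF assms] by simp
    show "summable (\<lambda>k. norm ((l * t) ^ k / fact k))"
      using summable_exp[of "\<bar>l * t\<bar>"] by (simp add: power_abs divide_inverse mult.commute abs_mult)
  qed
  also have "\<dots> = (\<Sum>k. t ^ k / fact k * (\<Sum>i\<le>k. real (k choose i) * l ^ (k - i) * mat_pow Q S i a b))"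
  proof (intro suminf_cong, unfold sum_distrib_left, intro sum.cong refl)
    fix k i :: nat assume "i \<in> {..k}"
    then have ik: "i \<le> k" by simp
    have tk: "t ^ k = t ^ i * t ^ (k - i)" using ik by (simp flip: power_add)
    show "(t ^ i / fact i * mat_pow Q S i a b) * ((l * t) ^ (k - i) / fact (k - i))
        = t ^ k / fact k * (real (k choose i) * l ^ (k - i) * mat_pow Q S i a b)"
      unfolding binomial_fact[OF ik] tk power_mult_distrib by (simp add: field_simps)
  qed
  finally show ?thesis unfolding mat_exp_def mat_pow_add_diag[OF assms] .
qed

text \<open>Adding a large multiple of the identity makes the matrix nonnegative, and it only
  multiplies the exponential by a positive scalar.\<close>

lemma mat_exp_nonneg:
  assumes "finite S" "a \<in> S" "0 \<le> t"
    and off_diag: "\<And>x y. x \<in> S \<Longrightarrow> y \<in> S \<Longrightarrow> x \<noteq> y \<Longrightarrow> 0 \<le> Q x y"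
  shows "0 \<le> mat_exp Q S t a b"
proof -
  let ?l = "abs_entry_sum Q S"
  let ?R = "\<lambda>x y. Q x y + (if x = y then ?l else 0)"
  have "0 \<le> ?R x y" if "x \<in> S" "y \<in> S" for x y
  proof (cases "x = y")
    case True
    have "\<bar>Q x x\<bar> \<le> (\<Sum>b\<in>S. \<bar>Q x b\<bar>)"
      using that assms(1) by (intro member_le_sum) auto
    also have "\<dots> \<le> ?l" by (rule row_abs_sum_le_abs_entry_sum[OF assms(1) that(1)])
    finally show ?thesis using True by simp
  qed (use off_diag[OF that] in simp)
  then have "0 \<le> mat_exp ?R S t a b"
    unfolding mat_exp_def
    by (intro suminf_nonneg summable_mat_exp_series[OF assms(1,2)] mult_nonneg_nonneg
        divide_nonneg_pos mat_pow_nonneg[OF assms(1,2)]) (auto simp: assms(3))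
  then show ?thesis
    unfolding exp_mult_mat_exp[OF assms(1,2), symmetric] by (simp add: zero_le_mult_iff)
qed

lemma mat_exp_has_real_derivative:
  assumes "finite S" "a \<in> S" "b \<in> S"
  shows "((\<lambda>t. mat_exp Q S t a b) has_real_derivative (\<Sum>z\<in>S. mat_exp Q S t a z * Q z b)) (at t)"
proof -
  define c where "c k = mat_pow Q S k a b / fact k" for k
  have series: "mat_exp Q S x a b = (\<Sum>k. c k * x ^ k)" for x
    unfolding mat_exp_def c_def by (simp add: mult_ac)
  have "summable (\<lambda>k. c k * y ^ k)" for y :: real
    using summable_mat_exp_series[OF assms(1,2), of y Q b] by (simp add: c_def mult_ac)
  then have deriv: "((\<lambda>x. \<Sum>k. c k * x ^ k) has_real_derivative (\<Sum>k. diffs c k * t ^ k)) (at t)"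
    by (rule termdiffs_strong_converges_everywhere)
  have "(\<Sum>k. diffs c k * t ^ k) = (\<Sum>k. t ^ k / fact k * mat_pow Q S (Suc k) a b)"
    by (rule suminf_cong) (simp add: diffs_def c_def fact_Suc del: mat_pow.simps of_nat_Suc)
  also have "\<dots> = (\<Sum>k. \<Sum>z\<in>S. t ^ k / fact k * mat_pow Q S k a z * Q z b)"
    by (rule suminf_cong) (simp add: mat_pow_Suc_right[OF assms] sum_distrib_left mult_ac del: mat_pow.simps)
  also have "\<dots> = (\<Sum>z\<in>S. \<Sum>k. t ^ k / fact k * mat_pow Q S k a z * Q z b)"
    by (rule suminf_sum) (intro summable_mult2 summable_mat_exp_series[OF assms(1,2)])
  also have "\<dots> = (\<Sum>z\<in>S. mat_exp Q S t a z * Q z b)"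
    unfolding mat_exp_def by (intro sum.cong refl suminf_mult2[symmetric] summable_mat_exp_series[OF assms(1,2)])
  finally show ?thesis using deriv unfolding series[abs_def] by simp
qed

lemma sum_mat_exp_row:
  assumes "finite S" "a \<in> S" "\<And>x. x \<in> S \<Longrightarrow> (\<Sum>y\<in>S. Q x y) = 0"
  shows "(\<Sum>b\<in>S. mat_exp Q S t a b) = 1"
proof -
  have "(\<Sum>b\<in>S. mat_exp Q S t a b) = (\<Sum>k. t ^ k / fact k * (\<Sum>b\<in>S. mat_pow Q S k a b))"
    unfolding mat_exp_def sum_distrib_left
    by (rule suminf_sum[symmetric]) (rule summable_mat_exp_series[OF assms(1,2)])
  also have "\<dots> = (\<Sum>k. if k = 0 then 1 else 0)"
    by (intro suminf_cong) (simp add: sum_mat_pow_row[OF assms] del: mat_pow.simps)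
  finally show ?thesis using sums_single[of 0 "\<lambda>_. 1::real"] by (simp add: sums_iff)
qed

lemma nondecreasing_bounded_convergent_at_top:
  fixes f :: "real \<Rightarrow> real"
  assumes mono: "\<And>s t. 0 \<le> s \<Longrightarrow> s \<le> t \<Longrightarrow> f s \<le> f t"
    and bounded: "\<And>t. 0 \<le> t \<Longrightarrow> f t \<le> B"
  shows "\<exists>L. (f \<longlongrightarrow> L) at_top"
proof -
  have bdd: "bdd_above (f ` {0..})"
    using bounded by (intro bdd_aboveI[of _ B]) auto
  have "(f \<longlongrightarrow> (SUP t\<in>{0..}. f t)) at_top"
  proof (rule increasing_tendsto)
    show "\<forall>\<^sub>F t in at_top. f t \<le> (SUP t\<in>{0..}. f t)"
      using eventually_ge_at_top[of "0::real"] by eventually_elim (intro cSUP_upper bdd, auto)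
  next
    fix x assume "x < (SUP t\<in>{0..}. f t)"
    then obtain t0 where t0: "0 \<le> t0" "x < f t0"
      using less_cSUP_iff[OF _ bdd] by auto
    show "\<forall>\<^sub>F t in at_top. x < f t"
      using eventually_ge_at_top[of t0] by eventually_elim (rule less_le_trans[OF t0(2) mono[OF t0(1)]])
  qed
  then show ?thesis by blast
qed

text \<open>For an absorbing state b the forward equation makes \<open>t \<mapsto> exp(tQ)(a, b)\<close>
  nondecreasing, and it is bounded by the row sum 1.\<close>

lemma mat_exp_absorbing_convergent:
  assumes fin: "finite S" and a: "a \<in> S" and b: "b \<in> S"
    and row_sum: "\<And>x. x \<in> S \<Longrightarrow> (\<Sum>y\<in>S. Q x y) = 0"
    and off_diag: "\<And>x y. x \<in> S \<Longrightarrow> y \<in> S \<Longrightarrow> x \<noteq> y \<Longrightarrow> 0 \<le> Q x y"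
    and absorbing: "Q b b = 0"
  shows "\<exists>L. ((\<lambda>t. mat_exp Q S t a b) \<longlongrightarrow> L) at_top"
proof (rule nondecreasing_bounded_convergent_at_top)
  let ?f = "\<lambda>t. mat_exp Q S t a b"
  have deriv_nonneg: "0 \<le> (\<Sum>z\<in>S. mat_exp Q S t a z * Q z b)" if "0 \<le> t" for t
  proof (intro sum_nonneg)
    fix z assume "z \<in> S"
    then show "0 \<le> mat_exp Q S t a z * Q z b"
      using absorbing mat_exp_nonneg[OF fin a that off_diag] off_diag[OF _ b]
      by (cases "z = b") auto
  qed
  show "?f s \<le> ?f t" if "0 \<le> s" "s \<le> t" for s t
  proof (rule DERIV_nonneg_imp_nondecreasing[OF that(2)])
    fix x assume "s \<le> x"
    with that show "\<exists>y. (?f has_real_derivative y) (at x) \<and> 0 \<le> y"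
      using mat_exp_has_real_derivative[OF fin a b] deriv_nonneg by fastforce
  qed
  show "?f t \<le> 1" if "0 \<le> t" for t
  proof -
    have "?f t \<le> (\<Sum>z\<in>S. mat_exp Q S t a z)"
      using fin b mat_exp_nonneg[OF fin a that off_diag] by (intro member_le_sum) auto
    then show ?thesis using sum_mat_exp_row[OF fin a row_sum] by simp
  qed
qed

section \<open>Sublists and annihilation\<close>

lemma sum_sum_subsets_Diff_singleton:
  fixes g :: "'a set \<Rightarrow> real"
  assumes "finite I"
  shows "(\<Sum>i\<in>I. \<Sum>J | J \<subseteq> I - {i} \<and> card J = k. g J)
       = (\<Sum>J | J \<subseteq> I \<and> card J = k. real (card I - k) * g J)"
proof -
  let ?T = "{J. J \<subseteq> I \<and> card J = k}"
  have fin_T: "finite ?T" by (rule finite_subset[of _ "Pow I"]) (auto simp: assms)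
  have "(\<Sum>i\<in>I. \<Sum>J | J \<subseteq> I - {i} \<and> card J = k. g J) = (\<Sum>i\<in>I. \<Sum>J\<in>?T. if i \<notin> J then g J else 0)"
  proof (rule sum.cong[OF refl])
    fix i assume "i \<in> I"
    have subsets_avoiding_i: "{J. J \<subseteq> I - {i} \<and> card J = k} = {J\<in>?T. i \<notin> J}" by auto
    show "(\<Sum>J | J \<subseteq> I - {i} \<and> card J = k. g J) = (\<Sum>J\<in>?T. if i \<notin> J then g J else 0)"
      by (simp only: subsets_avoiding_i sum.inter_filter[OF fin_T])
  qed
  also have "\<dots> = (\<Sum>J\<in>?T. \<Sum>i\<in>I. if i \<notin> J then g J else 0)" by (rule sum.swap)
  also have "\<dots> = (\<Sum>J\<in>?T. real (card I - k) * g J)"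
  proof (intro sum.cong refl)
    fix J assume J: "J \<in> ?T"
    have "(\<Sum>i\<in>I. if i \<notin> J then g J else 0) = real (card (I - J)) * g J"
      using sum.inter_filter[OF assms, of "\<lambda>_. g J" "\<lambda>i. i \<notin> J", symmetric]
      by (simp add: set_diff_eq)
    also have "card (I - J) = card I - k" using J assms by (auto simp: card_Diff_subset finite_subset)
    finally show "(\<Sum>i\<in>I. if i \<notin> J then g J else 0) = real (card I - k) * g J" .
  qed
  finally show ?thesis .
qed

lemma filter_nths: "filter P (nths xs I) = nths xs {i \<in> I. P (xs ! i)}"
  unfolding nths_def filter_map filter_filter comp_def
  by (intro arg_cong[where f="map fst"] filter_cong) (auto simp: set_zip)

lemma phi_nths: "phi (nths xs I) v = card {i. i < length xs \<and> i \<in> I \<and> xs ! i = v}"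
  unfolding phi_def filter_nths length_nths by (simp add: conj_assoc)

lemma sum_phi: "finite W \<Longrightarrow> set xs \<subseteq> W \<Longrightarrow> sum (phi xs) W = length xs"
proof (induction xs)
  case (Cons x xs)
  have "phi (x # xs) = (\<lambda>v. (if x = v then 1 else 0) + phi xs v)"
    by (auto simp add: phi_def)
  then show ?case using Cons by (simp add: sum.distrib)
qed (simp add: phi_def)

lemma phi_nths_in_config_space:
  assumes "finite W" "set xs \<subseteq> W" "I \<subseteq> {0..<length xs}"
  shows "phi (nths xs I) \<in> config_space W (card I)"
proof -
  have set_nths: "set (nths xs I) \<subseteq> W" using set_nths_subset[of xs I] assms(2) by blast
  have "{i. i < length xs \<and> i \<in> I} = I" using assms(3) by auto
  then have "sum (phi (nths xs I)) W = card I"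
    using sum_phi[OF assms(1) set_nths] by (simp add: length_nths)
  moreover have "phi (nths xs I) v = 0" if "v \<notin> W" for v
    using set_nths that by (auto simp: phi_def filter_empty_conv)
  ultimately show ?thesis by (simp add: config_space_def)
qed

lemma phi_nths_Diff_singleton:
  assumes "i \<in> I" "i < length xs"
  shows "phi (nths xs (I - {i})) = (phi (nths xs I))(xs ! i := phi (nths xs I) (xs ! i) - 1)"
proof
  fix v
  have "{j. j < length xs \<and> j \<in> I - {i} \<and> xs ! j = v} = {j. j < length xs \<and> j \<in> I \<and> xs ! j = v} - {i}"
    by auto
  then show "phi (nths xs (I - {i})) v = ((phi (nths xs I))(xs ! i := phi (nths xs I) (xs ! i) - 1)) v"
    using assms unfolding phi_nths by (auto simp: card_Diff_singleton_if)
qed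

lemma annih_phi_nths:
  assumes "finite W" "set xs \<subseteq> W" "I \<subseteq> {0..<length xs}"
  shows "annih W h (phi (nths xs I)) = (\<Sum>i\<in>I. h (phi (nths xs (I - {i}))))"
proof -
  let ?\<eta> = "phi (nths xs I)"
  have fin_I: "finite I" using assms(3) finite_subset by blast
  have "(\<Sum>i\<in>I. h (phi (nths xs (I - {i})))) = (\<Sum>i\<in>I. h (?\<eta>(xs ! i := ?\<eta> (xs ! i) - 1)))"
    using assms(3) by (intro sum.cong refl) (auto simp: phi_nths_Diff_singleton)
  also have "\<dots> = (\<Sum>x\<in>W. \<Sum>i\<in>{i\<in>I. xs ! i = x}. h (?\<eta>(xs ! i := ?\<eta> (xs ! i) - 1)))"
    using assms(2,3) nth_mem by (intro sum.group[OF fin_I assms(1), symmetric]) fastforce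
  also have "\<dots> = (\<Sum>x\<in>W. \<Sum>i\<in>{i\<in>I. xs ! i = x}. h (?\<eta>(x := ?\<eta> x - 1)))"
    by (intro sum.cong refl) auto
  also have "\<dots> = (\<Sum>x\<in>W. real (?\<eta> x) * h (?\<eta>(x := ?\<eta> x - 1)))"
  proof (intro sum.cong refl)
    fix x
    have "{i\<in>I. xs ! i = x} = {i. i < length xs \<and> i \<in> I \<and> xs ! i = x}" using assms(3) by auto
    then show "(\<Sum>i\<in>{i\<in>I. xs ! i = x}. h (?\<eta>(x := ?\<eta> x - 1))) = real (?\<eta> x) * h (?\<eta>(x := ?\<eta> x - 1))"
      by (simp add: phi_nths)
  qed
  finally show ?thesis unfolding annih_def by simp
qed

lemma funpow_annih_phi_nths:
  assumes "finite W" "set xs \<subseteq> W" "I \<subseteq> {0..<length xs}" "j \<le> card I"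
  shows "(annih W ^^ j) h (phi (nths xs I))
       = fact j * (\<Sum>J | J \<subseteq> I \<and> card J = card I - j. h (phi (nths xs J)))"
  using assms(3,4)
proof (induction j arbitrary: I)
  case 0
  have "{J. J \<subseteq> I \<and> card J = card I} = {I}"
    using 0 finite_subset[of I] card_subset_eq by blast
  then show ?case by simp
next
  case (Suc j)
  have fin_I: "finite I" using Suc.prems(1) finite_subset by blast
  have IH: "(annih W ^^ j) h (phi (nths xs (I - {i})))
      = fact j * (\<Sum>J | J \<subseteq> I - {i} \<and> card J = card I - Suc j. h (phi (nths xs J)))" if "i \<in> I" for i
  proof -
    have "card (I - {i}) = card I - 1" using that fin_I by simp
    moreover have "I - {i} \<subseteq> {0..<length xs}" using Suc.prems(1) by blast
    ultimately show ?thesis using Suc.IH[of "I - {i}"] Suc.prems(2) by simp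
  qed
  have "(annih W ^^ Suc j) h (phi (nths xs I)) = (\<Sum>i\<in>I. (annih W ^^ j) h (phi (nths xs (I - {i}))))"
    using annih_phi_nths[OF assms(1,2) Suc.prems(1)] by simp
  also have "\<dots> = fact j * real (card I - (card I - Suc j)) * (\<Sum>J | J \<subseteq> I \<and> card J = card I - Suc j. h (phi (nths xs J)))"
    by (simp add: IH sum_distrib_left[symmetric] sum_sum_subsets_Diff_singleton[OF fin_I] mult.assoc)
  finally show ?case using Suc.prems(2) by (simp add: fact_Suc)
qed

section \<open>The duality function\<close>

lemma of_nat_mult_choose_pred:
  "real n * real ((n - 1) choose k) = (real n - real k) * real (n choose k)"
proof (cases "k \<le> n")
  case True
  then have "real ((n - k) * (n choose k)) = real (n * ((n - 1) choose k))"
    by (simp only: binomial_absorb_comp)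
  with True show ?thesis by (simp add: of_nat_diff)
qed (simp add: binomial_eq_0)

lemma sum_update_pred:
  fixes \<xi> :: "'a \<Rightarrow> nat"
  assumes "finite W" "x \<in> W" "0 < \<xi> x"
  shows "sum (\<xi>(x := \<xi> x - 1)) W = sum \<xi> W - 1"
  using assms(3) unfolding sum.remove[OF assms(1,2)] by simp

lemma Fdual_update_pred:
  assumes "finite W" "x \<in> W"
  shows "Fdual W \<zeta> (\<xi>(x := \<xi> x - 1)) = real ((\<xi> x - 1) choose \<zeta> x) * (\<Prod>y\<in>W - {x}. real (\<xi> y choose \<zeta> y))"
  unfolding Fdual_def prod.remove[OF assms] by simp

lemma annih_Fdual:
  assumes "finite W"
  shows "annih W (Fdual W \<zeta>) \<xi> = (real (sum \<xi> W) - real (sum \<zeta> W)) * Fdual W \<zeta> \<xi>"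
proof -
  have "real (\<xi> x) * Fdual W \<zeta> (\<xi>(x := \<xi> x - 1)) = (real (\<xi> x) - real (\<zeta> x)) * Fdual W \<zeta> \<xi>"
    if "x \<in> W" for x
  proof -
    have "real (\<xi> x) * Fdual W \<zeta> (\<xi>(x := \<xi> x - 1))
        = (real (\<xi> x) * real ((\<xi> x - 1) choose \<zeta> x)) * (\<Prod>y\<in>W - {x}. real (\<xi> y choose \<zeta> y))"
      by (simp only: Fdual_update_pred[OF assms that] mult.assoc)
    also have "\<dots> = (real (\<xi> x) - real (\<zeta> x)) * Fdual W \<zeta> \<xi>"
      by (simp only: of_nat_mult_choose_pred Fdual_def prod.remove[OF assms that] mult.assoc)
    finally show ?thesis .
  qed
  then have "annih W (Fdual W \<zeta>) \<xi> = (\<Sum>x\<in>W. (real (\<xi> x) - real (\<zeta> x)) * Fdual W \<zeta> \<xi>)"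
    unfolding annih_def by (rule sum.cong[OF refl])
  then show ?thesis by (simp add: sum_distrib_right[symmetric] sum_subtractf)
qed

lemma Fdual_same_size:
  assumes "finite W" "\<And>x. x \<notin> W \<Longrightarrow> \<xi> x = 0" "\<And>x. x \<notin> W \<Longrightarrow> \<zeta> x = 0"
    and "sum \<xi> W = sum \<zeta> W"
  shows "Fdual W \<zeta> \<xi> = (if \<xi> = \<zeta> then 1 else 0)"
proof (cases "\<xi> = \<zeta>")
  case False
  then obtain x where x: "\<xi> x \<noteq> \<zeta> x" by (auto simp: fun_eq_iff)
  then have "x \<in> W" using assms(2,3) by fastforce
  have "\<exists>y\<in>W. \<xi> y < \<zeta> y"
  proof (rule ccontr)
    assume "\<not> (\<exists>y\<in>W. \<xi> y < \<zeta> y)"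
    then have "\<forall>y\<in>W. \<zeta> y \<le> \<xi> y" and "\<zeta> x < \<xi> x" using x \<open>x \<in> W\<close> by auto
    then have "sum \<zeta> W < sum \<xi> W"
      using \<open>x \<in> W\<close> by (intro sum_strict_mono_ex1[OF assms(1)]) blast+
    then show False using assms(4) by simp
  qed
  then show ?thesis using False assms(1) by (auto simp: Fdual_def binomial_eq_0)
qed (simp add: Fdual_def)

lemma funpow_annih_indicator:
  assumes "finite W" "\<And>x. x \<notin> W \<Longrightarrow> \<xi> x = 0" "\<And>x. x \<notin> W \<Longrightarrow> \<zeta> x = 0"
  shows "(annih W ^^ j) (\<lambda>\<eta>. if \<eta> = \<zeta> then 1 else 0) \<xi>
       = (if sum \<xi> W = sum \<zeta> W + j then fact j * Fdual W \<zeta> \<xi> else 0)"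
  using assms(2)
proof (induction j arbitrary: \<xi>)
  case 0
  show ?case using Fdual_same_size[OF assms(1) 0 assms(3)] by simp
next
  case (Suc j)
  let ?size_ok = "sum \<xi> W = sum \<zeta> W + Suc j"
  have "real (\<xi> x) * (annih W ^^ j) (\<lambda>\<eta>. if \<eta> = \<zeta> then 1 else 0) (\<xi>(x := \<xi> x - 1))
      = (if ?size_ok then fact j * (real (\<xi> x) * Fdual W \<zeta> (\<xi>(x := \<xi> x - 1))) else 0)"
    if "x \<in> W" for x
  proof (cases "\<xi> x = 0")
    case False
    have "\<xi> x \<le> sum \<xi> W" using member_le_sum[OF that, of \<xi>] assms(1) by simp
    moreover have "0 < \<xi> x" using False by simp
    ultimately have size_eq: "(sum (\<xi>(x := \<xi> x - 1)) W = sum \<zeta> W + j) = ?size_ok"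
      unfolding sum_update_pred[where \<xi>=\<xi>, OF assms(1) that \<open>0 < \<xi> x\<close>] by linarith
    have "\<And>y. y \<notin> W \<Longrightarrow> (\<xi>(x := \<xi> x - 1)) y = 0" using Suc.prems that by auto
    then have "(annih W ^^ j) (\<lambda>\<eta>. if \<eta> = \<zeta> then 1 else 0) (\<xi>(x := \<xi> x - 1))
        = (if ?size_ok then fact j * Fdual W \<zeta> (\<xi>(x := \<xi> x - 1)) else 0)"
      unfolding size_eq[symmetric] by (rule Suc.IH)
    then show ?thesis by simp
  qed simp
  then have "annih W ((annih W ^^ j) (\<lambda>\<eta>. if \<eta> = \<zeta> then 1 else 0)) \<xi>
      = (\<Sum>x\<in>W. if ?size_ok then fact j * (real (\<xi> x) * Fdual W \<zeta> (\<xi>(x := \<xi> x - 1))) else 0)"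
    unfolding annih_def[of W "(annih W ^^ j) _"] by (rule sum.cong[OF refl])
  also have "\<dots> = (if ?size_ok then fact j * annih W (Fdual W \<zeta>) \<xi> else 0)"
    by (cases ?size_ok) (simp_all add: annih_def sum_distrib_left)
  finally show ?case by (simp add: annih_Fdual[OF assms(1)] fact_Suc)
qed

section \<open>The absorbing generator as a rate matrix\<close>

lemma finite_config_space:
  assumes "finite Vs"
  shows "finite (config_space Vs N)"
proof (rule finite_subset)
  show "config_space Vs N \<subseteq> {f. \<forall>x. (x \<in> Vs \<longrightarrow> f x \<in> {0..N}) \<and> (x \<notin> Vs \<longrightarrow> f x = 0)}"
    using member_le_sum[OF _ _ assms] by (fastforce simp: config_space_def)
  show "finite {f. \<forall>x. (x \<in> Vs \<longrightarrow> f x \<in> {0..N}) \<and> (x \<notin> Vs \<longrightarrow> f x = (0::nat))}"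
    by (rule finite_set_of_finite_funs) (use assms in auto)
qed

lemma sum_indicator_jump:
  fixes g :: "'a \<Rightarrow> real"
  assumes "finite S" "\<eta> \<in> S" "a = 0 \<or> \<eta>' \<in> S"
  shows "(\<Sum>\<zeta>\<in>S. a * ((if \<eta>' = \<zeta> then 1 else 0) - (if \<eta> = \<zeta> then 1 else 0)) * g \<zeta>) = a * (g \<eta>' - g \<eta>)"
proof (cases "a = 0")
  case False
  then have "\<eta>' \<in> S" using assms(3) by simp
  have "(\<Sum>\<zeta>\<in>S. a * ((if \<eta>' = \<zeta> then 1 else 0) - (if \<eta> = \<zeta> then 1 else 0)) * g \<zeta>)
     = (\<Sum>\<zeta>\<in>S. a * (if \<eta>' = \<zeta> then g \<zeta> else 0) - a * (if \<eta> = \<zeta> then g \<zeta> else 0))"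
    by (rule sum.cong) auto
  then show ?thesis
    using assms(1,2) \<open>\<eta>' \<in> S\<close> by (simp add: sum_subtractf sum.delta flip: sum_distrib_left) (simp add: algebra_simps)
qed simp

context
  fixes V Vs :: "'v set" and c :: "('v \<Rightarrow> nat) \<Rightarrow> ('v \<Rightarrow> nat) \<Rightarrow> real" and r :: "'v \<Rightarrow> 'v \<Rightarrow> real"
  assumes fin: "finite Vs" and sub: "V \<subseteq> Vs"
begin

lemma sum_split_absorbing: "sum f Vs = sum f V + sum f (Vs - V)"
  using sum.subset_diff[OF sub fin, of f] by (simp add: add.commute)

lemma update_on_V_in_config_space:
  assumes "\<eta> \<in> config_space Vs N" "\<xi> \<in> config_space V (sum \<eta> V)"
  shows "(\<lambda>x. if x \<in> V then \<xi> x else \<eta> x) \<in> config_space Vs N"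
proof -
  let ?\<eta>' = "\<lambda>x. if x \<in> V then \<xi> x else \<eta> x"
  have "sum ?\<eta>' (Vs - V) = sum \<eta> (Vs - V)" by (rule sum.cong) auto
  then have "sum ?\<eta>' Vs = sum \<eta> Vs"
    using assms(2) sum_split_absorbing[of ?\<eta>'] sum_split_absorbing[of \<eta>] by (simp add: config_space_def)
  then show ?thesis using assms sub by (auto simp: config_space_def)
qed

lemma absorption_step_in_config_space:
  assumes "\<eta> \<in> config_space Vs N" "i \<in> V" "j \<in> Vs - V" "\<eta> i \<noteq> 0"
  shows "\<eta>(i := \<eta> i - 1, j := \<eta> j + 1) \<in> config_space Vs N"
proof -
  have ij: "i \<noteq> j" "i \<in> Vs" "j \<in> Vs" using assms sub by auto
  have "sum (\<eta>(i := \<eta> i - 1, j := \<eta> j + 1)) Vs = sum (\<eta>(i := \<eta> i - 1)) Vs + 1"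
    using ij fin by (simp add: sum.remove[of Vs j] sum.remove[of Vs j \<eta>])
  also have "\<dots> = sum \<eta> Vs"
    using ij fin assms(4) by (simp add: sum.remove[of Vs i] sum.remove[of Vs i \<eta>])
  finally show ?thesis using assms ij by (auto simp: config_space_def)
qed

lemma genL_eq_sum_indicator:
  assumes "\<eta> \<in> config_space Vs N"
  shows "(\<Sum>\<zeta>\<in>config_space Vs N. genL V c (\<lambda>z. if z = \<zeta> then 1 else 0) \<eta> * g \<zeta>) = genL V c g \<eta>"
proof -
  let ?S = "config_space Vs N"
  have "(\<Sum>\<zeta>\<in>?S. genL V c (\<lambda>z. if z = \<zeta> then 1 else 0) \<eta> * g \<zeta>)
     = (\<Sum>\<xi>\<in>config_space V (sum \<eta> V). \<Sum>\<zeta>\<in>?S. c (restrV V \<eta>) \<xi> *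
         ((if (\<lambda>x. if x \<in> V then \<xi> x else \<eta> x) = \<zeta> then 1 else 0) - (if \<eta> = \<zeta> then 1 else 0)) * g \<zeta>)"
    unfolding genL_def by (simp only: sum_distrib_right) (rule sum.swap)
  also have "\<dots> = genL V c g \<eta>"
    unfolding genL_def using update_on_V_in_config_space[OF assms] assms finite_config_space[OF fin]
    by (intro sum.cong refl sum_indicator_jump) auto
  finally show ?thesis .
qed

lemma genH_eq_sum_indicator:
  assumes "\<eta> \<in> config_space Vs N"
  shows "(\<Sum>\<zeta>\<in>config_space Vs N. genH V Vs r (\<lambda>z. if z = \<zeta> then 1 else 0) \<eta> * g \<zeta>) = genH V Vs r g \<eta>"
proof -
  let ?S = "config_space Vs N"
  let ?\<eta>' = "\<lambda>i j. \<eta>(i := \<eta> i - 1, j := \<eta> j + 1)"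
  have "(\<Sum>\<zeta>\<in>?S. genH V Vs r (\<lambda>z. if z = \<zeta> then 1 else 0) \<eta> * g \<zeta>)
     = (\<Sum>i\<in>V. \<Sum>j\<in>Vs - V. \<Sum>\<zeta>\<in>?S. r i j * real (\<eta> i) *
         ((if ?\<eta>' i j = \<zeta> then 1 else 0) - (if \<eta> = \<zeta> then 1 else 0)) * g \<zeta>)"
    unfolding genH_def sum_distrib_right
    by (subst sum.swap) (simp only: sum.swap[where A = ?S])
  also have "\<dots> = genH V Vs r g \<eta>"
    unfolding genH_def using absorption_step_in_config_space[OF assms] assms finite_config_space[OF fin]
    by (intro sum.cong refl sum_indicator_jump) auto
  finally show ?thesis .
qed

lemma genAbs_eq_sum_rate:
  assumes "\<eta> \<in> config_space Vs N"
  shows "genAbs V Vs c r g \<eta> = (\<Sum>\<zeta>\<in>config_space Vs N. rate V Vs c r \<eta> \<zeta> * g \<zeta>)"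
  using genL_eq_sum_indicator[OF assms] genH_eq_sum_indicator[OF assms]
  unfolding rate_def genAbs_def by (simp add: distrib_right sum.distrib)

lemma sum_rate_row:
  assumes "\<eta> \<in> config_space Vs N"
  shows "(\<Sum>\<zeta>\<in>config_space Vs N. rate V Vs c r \<eta> \<zeta>) = 0"
  using genAbs_eq_sum_rate[OF assms, of "\<lambda>_. 1"] by (simp add: genAbs_def genL_def genH_def)

lemma genAbs_absorbed:
  assumes "\<And>i. i \<in> V \<Longrightarrow> \<zeta> i = 0"
  shows "genAbs V Vs c r g \<zeta> = 0"
proof -
  have "(\<lambda>x. if x \<in> V then \<xi> x else \<zeta> x) = \<zeta>" if "\<xi> \<in> config_space V (sum \<zeta> V)" for \<xi>
    using that assms finite_subset[OF sub fin] by (auto simp: config_space_def fun_eq_iff)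
  then have "genL V c g \<zeta> = 0" unfolding genL_def by (intro sum.neutral) simp
  moreover have "genH V Vs r g \<zeta> = 0" unfolding genH_def using assms by simp
  ultimately show ?thesis by (simp add: genAbs_def)
qed

lemma rate_nonneg:
  assumes c_nonneg: "\<And>\<xi> \<xi>'. \<xi> \<in> state_space V V UNIV \<Longrightarrow> \<xi>' \<in> state_space V V UNIV \<Longrightarrow> \<xi> \<noteq> \<xi>' \<Longrightarrow> c \<xi> \<xi>' \<ge> 0"
    and r_nonneg: "\<And>i j. i \<in> V \<Longrightarrow> j \<in> Vs - V \<Longrightarrow> r i j \<ge> 0"
    and "\<eta> \<noteq> \<eta>'"
  shows "0 \<le> rate V Vs c r \<eta> \<eta>'"
proof -
  have "0 \<le> c (restrV V \<eta>) \<xi> * ((if (\<lambda>x. if x \<in> V then \<xi> x else \<eta> x) = \<eta>' then 1 else 0) - (if \<eta> = \<eta>' then 1 else 0))"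
    if "\<xi> \<in> config_space V (sum \<eta> V)" for \<xi>
  proof (cases "(\<lambda>x. if x \<in> V then \<xi> x else \<eta> x) = \<eta>'")
    case True
    then have "\<xi> \<noteq> restrV V \<eta>" using \<open>\<eta> \<noteq> \<eta>'\<close> by (auto simp: restrV_def)
    moreover have "restrV V \<eta> \<in> state_space V V UNIV" "\<xi> \<in> state_space V V UNIV"
      using that by (auto simp: restrV_def state_space_def config_space_def)
    ultimately have "0 \<le> c (restrV V \<eta>) \<xi>" using c_nonneg by metis
    then show ?thesis using True \<open>\<eta> \<noteq> \<eta>'\<close> by simp
  qed (use \<open>\<eta> \<noteq> \<eta>'\<close> in simp)
  then have "0 \<le> genL V c (\<lambda>\<zeta>. if \<zeta> = \<eta>' then 1 else 0) \<eta>"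
    unfolding genL_def by (intro sum_nonneg) auto
  moreover have "0 \<le> genH V Vs r (\<lambda>\<zeta>. if \<zeta> = \<eta>' then 1 else 0) \<eta>"
    unfolding genH_def using \<open>\<eta> \<noteq> \<eta>'\<close> by (auto intro!: sum_nonneg mult_nonneg_nonneg r_nonneg)
  ultimately show ?thesis unfolding rate_def genAbs_def by simp
qed

lemma Qpow_eq_mat_pow:
  assumes "\<eta> \<in> config_space Vs N"
  shows "Qpow V Vs c r k \<eta> \<xi> = mat_pow (rate V Vs c r) (config_space Vs N) k \<eta> \<xi>"
  using assms
proof (induction k arbitrary: \<eta>)
  case (Suc k)
  then have "sum \<eta> Vs = N" by (simp add: config_space_def)
  with Suc show ?case by (simp del: mat_pow.simps(1))
qed simp

lemma funpow_genAbs_eq_sum_Qpow: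
  assumes "\<eta> \<in> config_space Vs N"
  shows "(genAbs V Vs c r ^^ k) g \<eta> = (\<Sum>\<xi>\<in>config_space Vs N. Qpow V Vs c r k \<eta> \<xi> * g \<xi>)"
  using assms
proof (induction k arbitrary: \<eta>)
  case 0
  then show ?case
    using finite_config_space[OF fin] by (simp add: if_distrib[of "\<lambda>u. u * _"] cong: if_cong)
next
  case (Suc k)
  let ?S = "config_space Vs N"
  have N: "sum \<eta> Vs = N" using Suc.prems by (simp add: config_space_def)
  have "(genAbs V Vs c r ^^ Suc k) g \<eta> = (\<Sum>\<zeta>\<in>?S. rate V Vs c r \<eta> \<zeta> * (\<Sum>\<xi>\<in>?S. Qpow V Vs c r k \<zeta> \<xi> * g \<xi>))"
    using genAbs_eq_sum_rate[OF Suc.prems] Suc.IH by simp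
  also have "\<dots> = (\<Sum>\<xi>\<in>?S. (\<Sum>\<zeta>\<in>?S. rate V Vs c r \<eta> \<zeta> * Qpow V Vs c r k \<zeta> \<xi>) * g \<xi>)"
    by (simp only: sum_distrib_right sum_distrib_left mult.assoc) (rule sum.swap)
  finally show ?case by (simp add: N)
qed

lemma expect_t_sums:
  assumes "\<eta> \<in> config_space Vs N"
  shows "(\<lambda>k. t ^ k / fact k * (genAbs V Vs c r ^^ k) f \<eta>) sums expect_t V Vs c r t \<eta> f"
proof -
  let ?S = "config_space Vs N"
  have N: "sum \<eta> Vs = N" using assms by (simp add: config_space_def)
  have "(\<lambda>k. t ^ k / fact k * Qpow V Vs c r k \<eta> \<xi> * f \<xi>) sums (trans_prob V Vs c r t \<eta> \<xi> * f \<xi>)" for \<xi>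
    unfolding trans_prob_def Qpow_eq_mat_pow[OF assms]
    by (intro sums_mult2 summable_sums summable_mat_exp_series finite_config_space fin assms)
  then have "(\<lambda>k. \<Sum>\<xi>\<in>?S. t ^ k / fact k * Qpow V Vs c r k \<eta> \<xi> * f \<xi>) sums expect_t V Vs c r t \<eta> f"
    unfolding expect_t_def N by (rule sums_sum)
  then show ?thesis
    by (simp add: funpow_genAbs_eq_sum_Qpow[OF assms] sum_distrib_left mult.assoc)
qed

lemma trans_prob_eq_expect_t_indicator:
  assumes "\<eta> \<in> config_space Vs N" "\<zeta> \<in> config_space Vs N"
  shows "trans_prob V Vs c r t \<eta> \<zeta> = expect_t V Vs c r t \<eta> (\<lambda>\<xi>. if \<xi> = \<zeta> then 1 else 0)"
  using assms finite_config_space[OF fin] by (simp add: expect_t_def config_space_def if_distrib[of "\<lambda>u. _ * u"] cong: if_cong)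

text \<open>A configuration without particles on V is absorbing: its row of rates vanishes.\<close>

lemma trans_prob_absorbed_convergent:
  assumes c_nonneg: "\<And>\<xi> \<xi>'. \<xi> \<in> state_space V V UNIV \<Longrightarrow> \<xi>' \<in> state_space V V UNIV \<Longrightarrow> \<xi> \<noteq> \<xi>' \<Longrightarrow> c \<xi> \<xi>' \<ge> 0"
    and r_nonneg: "\<And>i j. i \<in> V \<Longrightarrow> j \<in> Vs - V \<Longrightarrow> r i j \<ge> 0"
    and "\<eta> \<in> config_space Vs N" "\<zeta> \<in> config_space Vs N" "\<And>i. i \<in> V \<Longrightarrow> \<zeta> i = 0"
  shows "\<exists>L. ((\<lambda>t. trans_prob V Vs c r t \<eta> \<zeta>) \<longlongrightarrow> L) at_top"
proof -
  have "\<exists>L. ((\<lambda>t. mat_exp (rate V Vs c r) (config_space Vs N) t \<eta> \<zeta>) \<longlongrightarrow> L) at_top"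
    using finite_config_space[OF fin] assms(3,4) sum_rate_row rate_nonneg[OF c_nonneg r_nonneg]
      genAbs_absorbed[OF assms(5)]
    by (intro mat_exp_absorbing_convergent) (auto simp: rate_def)
  then show ?thesis
    unfolding trans_prob_def mat_exp_def Qpow_eq_mat_pow[OF assms(3)] .
qed

end

section \<open>Consistency and duality\<close>

lemma funpow_commute_on:
  fixes A B :: "('s \<Rightarrow> 'b) \<Rightarrow> 's \<Rightarrow> 'b"
  assumes A_cong: "\<And>g g' x. x \<in> S \<Longrightarrow> (\<And>y. y \<in> S \<Longrightarrow> g y = g' y) \<Longrightarrow> A g x = A g' x"
    and B_cong: "\<And>g g' x. x \<in> S \<Longrightarrow> (\<And>y. y \<in> S \<Longrightarrow> g y = g' y) \<Longrightarrow> B g x = B g' x"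
    and commute: "\<And>g x. x \<in> S \<Longrightarrow> A (B g) x = B (A g) x"
    and "x \<in> S"
  shows "(A ^^ k) ((B ^^ j) g) x = (B ^^ j) ((A ^^ k) g) x"
proof -
  have Ak_cong: "(A ^^ k) g x = (A ^^ k) g' x" if "x \<in> S" "\<And>y. y \<in> S \<Longrightarrow> g y = g' y" for g g' x
    using that by (induction k arbitrary: x) (auto intro: A_cong)
  have Ak_B: "(A ^^ k) (B g) x = B ((A ^^ k) g) x" if "x \<in> S" for g x
    using that
  proof (induction k arbitrary: x)
    case (Suc k)
    then have "A ((A ^^ k) (B g)) x = A (B ((A ^^ k) g)) x" by (intro A_cong) auto
    with Suc.prems show ?case by (simp add: commute)
  qed simp
  show ?thesis
    using \<open>x \<in> S\<close>
  proof (induction j arbitrary: x)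
    case (Suc j)
    then have "B ((A ^^ k) ((B ^^ j) g)) x = B ((B ^^ j) ((A ^^ k) g)) x" by (intro B_cong) auto
    with Suc.prems show ?case by (simp add: Ak_B)
  qed simp
qed

context
  fixes V Vs :: "'v set" and \<Lambda> :: "nat set"
    and c :: "('v \<Rightarrow> nat) \<Rightarrow> ('v \<Rightarrow> nat) \<Rightarrow> real" and r :: "'v \<Rightarrow> 'v \<Rightarrow> real"
  assumes sub: "V \<subseteq> Vs"
    and Lambda_down: "\<And>k. Suc k \<in> \<Lambda> \<Longrightarrow> k \<in> \<Lambda>"
    and c_Lambda: "\<And>\<xi> \<xi>'. \<xi> \<in> state_space V V \<Lambda> \<Longrightarrow> \<xi>' \<in> config_space V (sum \<xi> V) \<Longrightarrow>
                     c \<xi> \<xi>' \<noteq> 0 \<Longrightarrow> \<xi>' \<in> state_space V V \<Lambda>"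
begin

lemma state_space_remove_particle:
  assumes "\<eta> \<in> state_space V Vs \<Lambda>"
  shows "\<eta>(x := \<eta> x - 1) \<in> state_space V Vs \<Lambda>"
proof -
  have "\<eta> x - 1 \<in> \<Lambda>" if "x \<in> V"
    using assms that Lambda_down[of "\<eta> x - 1"] by (cases "\<eta> x") (auto simp: state_space_def)
  then show ?thesis using assms by (auto simp: state_space_def)
qed

lemma annih_cong_state_space:
  assumes "\<eta> \<in> state_space V Vs \<Lambda>" "\<And>\<zeta>. \<zeta> \<in> state_space V Vs \<Lambda> \<Longrightarrow> g \<zeta> = g' \<zeta>"
  shows "annih Vs g \<eta> = annih Vs g' \<eta>"
  unfolding annih_def using assms state_space_remove_particle[OF assms(1)] by simp

lemma genAbs_cong_state_space:
  assumes \<eta>: "\<eta> \<in> state_space V Vs \<Lambda>" and g_eq: "\<And>\<zeta>. \<zeta> \<in> state_space V Vs \<Lambda> \<Longrightarrow> g \<zeta> = g' \<zeta>"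
  shows "genAbs V Vs c r g \<eta> = genAbs V Vs c r g' \<eta>"
proof -
  have "restrV V \<eta> \<in> state_space V V \<Lambda>" "sum (restrV V \<eta>) V = sum \<eta> V"
    using \<eta> by (auto simp: restrV_def state_space_def)
  then have "(\<lambda>x. if x \<in> V then \<xi> x else \<eta> x) \<in> state_space V Vs \<Lambda>"
    if "\<xi> \<in> config_space V (sum \<eta> V)" "c (restrV V \<eta>) \<xi> \<noteq> 0" for \<xi>
    using c_Lambda[of "restrV V \<eta>" \<xi>] that \<eta> sub by (auto simp: state_space_def)
  then have "genL V c g \<eta> = genL V c g' \<eta>"
    unfolding genL_def using g_eq \<eta> by (intro sum.cong refl) (metis mult_zero_left)
  moreover have "\<eta>(i := \<eta> i - 1, j := \<eta> j + 1) \<in> state_space V Vs \<Lambda>"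
    if "i \<in> V" "j \<in> Vs - V" "\<eta> i \<noteq> 0" for i j
    using \<eta> that sub Lambda_down[of "\<eta> i - 1"] by (auto simp: state_space_def)
  then have "genH V Vs r g \<eta> = genH V Vs r g' \<eta>"
    unfolding genH_def using g_eq \<eta> by (intro sum.cong refl) (metis mult_zero_right mult_zero_left of_nat_0)
  ultimately show ?thesis by (simp add: genAbs_def)
qed

lemma funpow_genAbs_funpow_annih:
  assumes "consistent V Vs \<Lambda> c r" "\<eta> \<in> state_space V Vs \<Lambda>"
  shows "(genAbs V Vs c r ^^ k) ((annih Vs ^^ j) g) \<eta> = (annih Vs ^^ j) ((genAbs V Vs c r ^^ k) g) \<eta>"
  using genAbs_cong_state_space annih_cong_state_space assms unfolding consistent_def
  by (intro funpow_commute_on[where S = "state_space V Vs \<Lambda>"]) blast+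

end

lemma config_space_absorbing_sites:
  assumes "finite Vs" "V \<subseteq> Vs" "\<zeta> \<in> config_space (Vs - V) m"
  shows "\<zeta> \<in> config_space Vs m" "\<And>i. i \<in> V \<Longrightarrow> \<zeta> i = 0"
  using assms(3) sum.subset_diff[OF assms(2,1), of \<zeta>] by (auto simp: config_space_def)

lemma Fdual_eq_funpow_annih:
  assumes "finite Vs" "V \<subseteq> Vs" "\<xi> \<in> config_space Vs n" "\<zeta> \<in> config_space (Vs - V) m" "m \<le> n"
  shows "Fdual (Vs - V) \<zeta> \<xi> = (annih Vs ^^ (n - m)) (\<lambda>\<eta>. if \<eta> = \<zeta> then 1 else 0) \<xi> / fact (n - m)"
proof -
  have "sum \<zeta> Vs = m"
    using config_space_absorbing_sites(1)[OF assms(1,2,4)] by (simp add: config_space_def)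
  then have "(annih Vs ^^ (n - m)) (\<lambda>\<eta>. if \<eta> = \<zeta> then 1 else 0) \<xi> = fact (n - m) * Fdual Vs \<zeta> \<xi>"
    using assms by (subst funpow_annih_indicator) (auto simp: config_space_def)
  moreover have "(\<Prod>v\<in>V. real (\<xi> v choose \<zeta> v)) = 1"
    using config_space_absorbing_sites(2)[OF assms(1,2,4)] by (simp add: prod.neutral)
  then have "Fdual Vs \<zeta> \<xi> = Fdual (Vs - V) \<zeta> \<xi>"
    unfolding Fdual_def prod.subset_diff[OF assms(2,1)] by simp
  ultimately show ?thesis by simp
qed

context
  fixes V Vs :: "'v set" and \<Lambda> :: "nat set"
    and c :: "('v \<Rightarrow> nat) \<Rightarrow> ('v \<Rightarrow> nat) \<Rightarrow> real" and r :: "'v \<Rightarrow> 'v \<Rightarrow> real"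
    and xs :: "'v list"
  assumes fin: "finite Vs" and sub: "V \<subseteq> Vs"
    and Lambda_down: "\<And>k. Suc k \<in> \<Lambda> \<Longrightarrow> k \<in> \<Lambda>"
    and c_Lambda: "\<And>\<xi> \<xi>'. \<xi> \<in> state_space V V \<Lambda> \<Longrightarrow> \<xi>' \<in> config_space V (sum \<xi> V) \<Longrightarrow>
                     c \<xi> \<xi>' \<noteq> 0 \<Longrightarrow> \<xi>' \<in> state_space V V \<Lambda>"
    and cons: "consistent V Vs \<Lambda> c r"
    and xs_sites: "set xs \<subseteq> Vs"
    and xs_state: "phi xs \<in> state_space V Vs \<Lambda>"
begin

lemma phi_nths_config_space:
  "I \<subseteq> {0..<length xs} \<Longrightarrow> phi (nths xs I) \<in> config_space Vs (card I)"
  by (rule phi_nths_in_config_space[OF fin xs_sites])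

lemma phi_config_space: "phi xs \<in> config_space Vs (length xs)"
  using phi_nths_config_space[of "{0..<length xs}"] by (simp add: nths_all)

text \<open>Annihilating j particles of the initial configuration commutes with the evolution,
  so it produces the evolutions started from all sublists of length n - j.\<close>

lemma expect_t_funpow_annih:
  assumes "j \<le> length xs"
  shows "expect_t V Vs c r t (phi xs) ((annih Vs ^^ j) g)
       = fact j * (\<Sum>I | I \<subseteq> {0..<length xs} \<and> card I = length xs - j.
                      expect_t V Vs c r t (phi (nths xs I)) g)"
proof -
  let ?II = "{I. I \<subseteq> {0..<length xs} \<and> card I = length xs - j}"
  let ?term = "\<lambda>I k. t ^ k / fact k * (genAbs V Vs c r ^^ k) g (phi (nths xs I))"
  have "(genAbs V Vs c r ^^ k) ((annih Vs ^^ j) g) (phi xs)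
      = (annih Vs ^^ j) ((genAbs V Vs c r ^^ k) g) (phi (nths xs {0..<length xs}))" for k
    by (simp add: funpow_genAbs_funpow_annih[OF sub Lambda_down c_Lambda cons xs_state] nths_all)
  also have "\<dots> k = fact j * (\<Sum>I\<in>?II. (genAbs V Vs c r ^^ k) g (phi (nths xs I)))" for k
    using assms by (subst funpow_annih_phi_nths[OF fin xs_sites]) auto
  finally have "(\<lambda>k. t ^ k / fact k * (genAbs V Vs c r ^^ k) ((annih Vs ^^ j) g) (phi xs))
      = (\<lambda>k. fact j * (\<Sum>I\<in>?II. ?term I k))"
    by (simp add: sum_distrib_left mult_ac)
  moreover have "(\<lambda>k. fact j * (\<Sum>I\<in>?II. ?term I k))
      sums (fact j * (\<Sum>I\<in>?II. expect_t V Vs c r t (phi (nths xs I)) g))"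
  proof (intro sums_mult sums_sum)
    fix I assume "I \<in> ?II"
    then show "?term I sums expect_t V Vs c r t (phi (nths xs I)) g"
      by (intro expect_t_sums[OF fin sub phi_nths_config_space]) simp
  qed
  ultimately have "(\<lambda>k. t ^ k / fact k * (genAbs V Vs c r ^^ k) ((annih Vs ^^ j) g) (phi xs))
      sums (fact j * (\<Sum>I\<in>?II. expect_t V Vs c r t (phi (nths xs I)) g))"
    by simp
  then show ?thesis by (rule sums_unique2[OF expect_t_sums[OF fin sub phi_config_space]])
qed

lemma expect_t_Fdual_phi:
  assumes "\<zeta> \<in> config_space (Vs - V) m" "m \<le> length xs"
  shows "expect_t V Vs c r t (phi xs) (Fdual (Vs - V) \<zeta>)
       = (\<Sum>I | I \<subseteq> {0..<length xs} \<and> card I = m. trans_prob V Vs c r t (phi (nths xs I)) \<zeta>)"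
proof -
  let ?n = "length xs"
  let ?indicator = "\<lambda>\<eta>. if \<eta> = \<zeta> then 1 else 0"
  have "expect_t V Vs c r t (phi xs) (Fdual (Vs - V) \<zeta>)
      = expect_t V Vs c r t (phi xs) ((annih Vs ^^ (?n - m)) ?indicator) / fact (?n - m)"
    using phi_config_space Fdual_eq_funpow_annih[OF fin sub _ assms]
    by (simp add: expect_t_def config_space_def sum_divide_distrib)
  also have "\<dots> = (\<Sum>I | I \<subseteq> {0..<?n} \<and> card I = m. expect_t V Vs c r t (phi (nths xs I)) ?indicator)"
    using assms(2) by (simp add: expect_t_funpow_annih)
  also have "\<dots> = (\<Sum>I | I \<subseteq> {0..<?n} \<and> card I = m. trans_prob V Vs c r t (phi (nths xs I)) \<zeta>)"
  proof (rule sum.cong[OF refl])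
    fix I assume "I \<in> {I. I \<subseteq> {0..<?n} \<and> card I = m}"
    then have "phi (nths xs I) \<in> config_space Vs m" using phi_nths_config_space by auto
    moreover note config_space_absorbing_sites(1)[OF fin sub assms(1)]
    ultimately show "expect_t V Vs c r t (phi (nths xs I)) ?indicator = trans_prob V Vs c r t (phi (nths xs I)) \<zeta>"
      by (simp add: trans_prob_eq_expect_t_indicator[OF fin sub])
  qed
  finally show ?thesis .
qed

end

theorem theorem5p5:
  fixes V Vs :: "'v set" and \<Lambda> :: "nat set"
    and c :: "('v \<Rightarrow> nat) \<Rightarrow> ('v \<Rightarrow> nat) \<Rightarrow> real"
    and r :: "'v \<Rightarrow> 'v \<Rightarrow> real"
    and xs :: "'v list" and m :: nat and \<zeta> :: "'v \<Rightarrow> nat"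
  assumes fin: "finite Vs" and sub: "V \<subseteq> Vs"
    and Lambda0: "0 \<in> \<Lambda>" and Lambda_down: "\<And>k. Suc k \<in> \<Lambda> \<Longrightarrow> k \<in> \<Lambda>"
    and c_nonneg: "\<And>\<xi> \<xi>'. \<xi> \<in> state_space V V UNIV \<Longrightarrow> \<xi>' \<in> state_space V V UNIV \<Longrightarrow>
                     \<xi> \<noteq> \<xi>' \<Longrightarrow> c \<xi> \<xi>' \<ge> 0"
    and c_conserv: "\<And>\<xi> \<xi>'. \<xi> \<in> state_space V V UNIV \<Longrightarrow> \<xi>' \<in> state_space V V UNIV \<Longrightarrow>
                     c \<xi> \<xi>' \<noteq> 0 \<Longrightarrow> sum \<xi>' V = sum \<xi> V"
    and c_Lambda: "\<And>\<xi> \<xi>'. \<xi> \<in> state_space V V \<Lambda> \<Longrightarrow> \<xi>' \<in> config_space V (sum \<xi> V) \<Longrightarrow>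
                     c \<xi> \<xi>' \<noteq> 0 \<Longrightarrow> \<xi>' \<in> state_space V V \<Lambda>"
    and r_nonneg: "\<And>i j. i \<in> V \<Longrightarrow> j \<in> Vs - V \<Longrightarrow> r i j \<ge> 0"
    and cons: "consistent V Vs \<Lambda> c r"
    and xs_sites: "set xs \<subseteq> Vs"
    and xs_state: "phi xs \<in> state_space V Vs \<Lambda>"
    and m_pos: "1 \<le> m" and m_less: "m < length xs"
    and zeta: "\<zeta> \<in> config_space (Vs - V) m"
  shows "expect_inf V Vs c r (phi xs) (Fdual (Vs - V) \<zeta>) =
         (\<Sum>I | I \<subseteq> {0..<length xs} \<and> card I = m.
            prob_inf V Vs c r (phi (nths xs I)) \<zeta>)"
proof -
  let ?II = "{I. I \<subseteq> {0..<length xs} \<and> card I = m}"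
  have "\<exists>L. ((\<lambda>t. trans_prob V Vs c r t (phi (nths xs I)) \<zeta>) \<longlongrightarrow> L) at_top" if "I \<in> ?II" for I
    using that phi_nths_in_config_space[OF fin xs_sites] config_space_absorbing_sites[OF fin sub zeta]
    by (intro trans_prob_absorbed_convergent[OF fin sub c_nonneg r_nonneg]) auto
  then obtain L where L: "\<And>I. I \<in> ?II \<Longrightarrow> ((\<lambda>t. trans_prob V Vs c r t (phi (nths xs I)) \<zeta>) \<longlongrightarrow> L I) at_top"
    by metis
  then have "((\<lambda>t. \<Sum>I\<in>?II. trans_prob V Vs c r t (phi (nths xs I)) \<zeta>) \<longlongrightarrow> (\<Sum>I\<in>?II. L I)) at_top"
    by (rule tendsto_sum)
  then have "((\<lambda>t. expect_t V Vs c r t (phi xs) (Fdual (Vs - V) \<zeta>)) \<longlongrightarrow> (\<Sum>I\<in>?II. L I)) at_top"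
    using m_less by (simp add: expect_t_Fdual_phi[OF fin sub Lambda_down c_Lambda cons xs_sites xs_state zeta])
  then have "expect_inf V Vs c r (phi xs) (Fdual (Vs - V) \<zeta>) = (\<Sum>I\<in>?II. L I)"
    unfolding expect_inf_def by (simp add: tendsto_Lim)
  also have "\<dots> = (\<Sum>I\<in>?II. prob_inf V Vs c r (phi (nths xs I)) \<zeta>)"
    unfolding prob_inf_def by (intro sum.cong refl tendsto_Lim[symmetric] L) auto
  finally show ?thesis .
qed

end
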